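(* Let ${x}, {x}' \in \mathbb{S}^{d-1}$ with $\|{x} - {x}'\| \leq \delta \leq 2$, where $\delta>0$, and let $\epsilon \in (0, 1)$. There exist absolute constants $C,C'>0$ such that if $d_1 \geq \frac{C}{\delta} \log \frac{1}{\epsilon}$, then with probability at least $1 - \epsilon$ over the network parameters, \[ \|\nabla_{\theta} f({x}) - \nabla_{\theta} f({x}')\| \leq C'\sqrt{\delta}. \]
   Context: Shallow ReLU network $f(x;W,v)=\frac{1}{\sqrt{d_1}}\sum_{j=1}^{d_1}v_j\sigma(w_j^Tx)$ with $\sigma(z)=\max\{0,z\}$, $W=[w_1,\dots,w_{d_1}]^T\in\mathbb{R}^{d_1\times d}$, $v\in\mathbb{R}^{d_1}$, all entries iid $\mathcal N(0,1)$, $\theta=(W,v)$. The gradient is $\nabla_{w_j}f(x)=\frac1{\sqrt{d_1}}v_j\dot\sigma(w_j^Tx)x$, $\nabla_{v_j}f(x)=\frac1{\sqrt{d_1}}\sigma(w_j^Tx)$, with $\dot\sigma(z)=1$ for $z>0$ and $0$ otherwise; its norm is the Euclidean (Frobenius) norm on $\mathbb{R}^{d_1\times d}\times\mathbb{R}^{d_1}$. *)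

theory Defs
  imports "HOL-Probability.Probability"
begin

text \<open>Vectors in R^d are represented as functions nat => real, using only indices < d.
  Network parameters theta = (W, v) are a single function on the index set
  Inl (j,k) (entry W_{jk}, j < d1, k < d) and Inr j (entry v_j, j < d1).\<close>

definition relu :: "real \<Rightarrow> real" where
  "relu z = max 0 z"

definition relu_deriv :: "real \<Rightarrow> real" where
  "relu_deriv z = (if z > 0 then 1 else 0)"

definition vnorm :: "nat \<Rightarrow> (nat \<Rightarrow> real) \<Rightarrow> real" where
  "vnorm d x = sqrt (\<Sum>k<d. (x k)\<^sup>2)"

definition on_sphere :: "nat \<Rightarrow> (nat \<Rightarrow> real) \<Rightarrow> bool" where
  "on_sphere d x \<longleftrightarrow> vnorm d x = 1"

definition param_index :: "nat \<Rightarrow> nat \<Rightarrow> ((nat \<times> nat) + nat) set" where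
  "param_index d1 d = Inl ` ({..<d1} \<times> {..<d}) \<union> Inr ` {..<d1}"

definition preact :: "nat \<Rightarrow> ((nat \<times> nat) + nat \<Rightarrow> real) \<Rightarrow> nat \<Rightarrow> (nat \<Rightarrow> real) \<Rightarrow> real" where
  "preact d \<theta> j x = (\<Sum>k<d. \<theta> (Inl (j, k)) * x k)"

definition grad_W :: "nat \<Rightarrow> nat \<Rightarrow> ((nat \<times> nat) + nat \<Rightarrow> real) \<Rightarrow> (nat \<Rightarrow> real) \<Rightarrow> nat \<Rightarrow> nat \<Rightarrow> real" where
  "grad_W d1 d \<theta> x j k = 1 / sqrt (real d1) * \<theta> (Inr j) * relu_deriv (preact d \<theta> j x) * x k"

definition grad_v :: "nat \<Rightarrow> nat \<Rightarrow> ((nat \<times> nat) + nat \<Rightarrow> real) \<Rightarrow> (nat \<Rightarrow> real) \<Rightarrow> nat \<Rightarrow> real" where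
  "grad_v d1 d \<theta> x j = 1 / sqrt (real d1) * relu (preact d \<theta> j x)"

definition grad_diff_norm :: "nat \<Rightarrow> nat \<Rightarrow> ((nat \<times> nat) + nat \<Rightarrow> real) \<Rightarrow> (nat \<Rightarrow> real) \<Rightarrow> (nat \<Rightarrow> real) \<Rightarrow> real" where
  "grad_diff_norm d1 d \<theta> x x' = sqrt (
      (\<Sum>j<d1. \<Sum>k<d. (grad_W d1 d \<theta> x j k - grad_W d1 d \<theta> x' j k)\<^sup>2)
    + (\<Sum>j<d1. (grad_v d1 d \<theta> x j - grad_v d1 d \<theta> x' j)\<^sup>2))"

definition std_gauss :: "real measure" where
  "std_gauss = density lborel std_normal_density"

definition param_measure :: "nat \<Rightarrow> nat \<Rightarrow> ((nat \<times> nat) + nat \<Rightarrow> real) measure" where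
  "param_measure d1 d = PiM (param_index d1 d) (\<lambda>_. std_gauss)"

end

theory Submission
  imports Defs
begin

(* Write h_j = w_j \<bullet> (x - x') and let F_j indicate that the ReLU gate of neuron j differs at
   x and x'. Since relu is 1-Lipschitz and x, x' are unit vectors,
     d1 * |\<nabla>f(x) - \<nabla>f(x')|^2 \<le> \<Sum>_j Y_j,   Y_j = v_j^2 (\<delta>^2 + F_j) + h_j^2.
   The Y_j depend on disjoint blocks of parameters, hence are independent. A flip requires
   |w_j \<bullet> x| \<le> |h_j|, which has probability at most 2 |x - x'| \<le> 2 \<delta>; as F_j is
   independent of v_j, Gaussian moment generating functions give E exp (Y_j / 64) \<le> exp (2 \<delta>).
   A Chernoff bound then gives P (\<Sum>_j Y_j > 196 \<delta> d1) \<le> exp (- \<delta> d1), which is at most \<epsilon>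
   once d1 \<ge> ln (1 / \<epsilon>) / \<delta>; so C = 1 and C' = 14 work. *)

section \<open>Gaussian integrals and a Chernoff bound\<close>

lemma nn_integral_distributed_eq:
  assumes "distributed M lborel X f" and "g \<in> borel_measurable borel"
  shows "(\<integral>\<^sup>+ \<omega>. g (X \<omega>) \<partial>M) = (\<integral>\<^sup>+ t. g t \<partial>density lborel f)"
  using assms by (subst nn_integral_density) (auto simp: distributed_nn_integral distributed_def)

lemma nn_integral_normal_density:
  assumes "0 < \<sigma>"
  shows "(\<integral>\<^sup>+ t. ennreal (normal_density m \<sigma> t) \<partial>lborel) = 1"
  using assms by (subst nn_integral_eq_integral) (auto simp: integral_normal_moment_even[of \<sigma> m 0, simplified])

lemma nn_integral_exp_square_normal:
  assumes \<sigma>: "0 < \<sigma>" and s: "2 * s * \<sigma>\<^sup>2 < 1"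
  shows "(\<integral>\<^sup>+ t. ennreal (exp (s * t\<^sup>2)) \<partial>density lborel (\<lambda>t. ennreal (normal_density 0 \<sigma> t)))
     = ennreal (1 / sqrt (1 - 2 * s * \<sigma>\<^sup>2))"
proof -
  define q where "q = 1 - 2 * s * \<sigma>\<^sup>2"
  have q: "0 < q" using s by (simp add: q_def)
  define \<tau> where "\<tau> = \<sigma> / sqrt q"
  have \<tau>: "0 < \<tau>" using q \<sigma> by (simp add: \<tau>_def)
  have \<tau>2: "\<tau>\<^sup>2 = \<sigma>\<^sup>2 / q" using q by (simp add: \<tau>_def power_divide)
  have pointwise: "normal_density 0 \<sigma> t * exp (s * t\<^sup>2) = 1 / sqrt q * normal_density 0 \<tau> t" for t
  proof -
    have e: "- (t - 0)\<^sup>2 / (2 * \<sigma>\<^sup>2) + s * t\<^sup>2 = - (t - 0)\<^sup>2 / (2 * \<tau>\<^sup>2)"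
      using q \<sigma> by (simp add: q_def \<tau>2 field_simps)
    have "2 * pi * \<sigma>\<^sup>2 = q * (2 * pi * \<tau>\<^sup>2)"
      using q by (simp add: \<tau>2)
    then have c: "1 / sqrt (2 * pi * \<sigma>\<^sup>2) = 1 / sqrt q * (1 / sqrt (2 * pi * \<tau>\<^sup>2))"
      by (simp add: real_sqrt_mult)
    have "normal_density 0 \<sigma> t * exp (s * t\<^sup>2)
        = 1 / sqrt (2 * pi * \<sigma>\<^sup>2) * exp (- (t - 0)\<^sup>2 / (2 * \<sigma>\<^sup>2) + s * t\<^sup>2)"
      unfolding normal_density_def exp_add by (simp only: mult.assoc)
    also have "\<dots> = 1 / sqrt q * normal_density 0 \<tau> t"
      unfolding c e normal_density_def by (simp only: mult.assoc)
    finally show ?thesis .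
  qed
  have "(\<integral>\<^sup>+ t. ennreal (exp (s * t\<^sup>2)) \<partial>density lborel (\<lambda>t. ennreal (normal_density 0 \<sigma> t)))
      = (\<integral>\<^sup>+ t. ennreal (1 / sqrt q) * ennreal (normal_density 0 \<tau> t) \<partial>lborel)"
    using q by (subst nn_integral_density) (auto simp: ennreal_mult'[symmetric] pointwise)
  also have "\<dots> = ennreal (1 / sqrt q)"
    by (subst nn_integral_cmult) (auto simp: nn_integral_normal_density[OF \<tau>])
  finally show ?thesis by (simp add: q_def)
qed

lemma nn_integral_exp_neg_square_normal_le:
  assumes \<alpha>: "0 < \<alpha>"
  shows "(\<integral>\<^sup>+ t. ennreal (exp (- \<alpha> * t\<^sup>2)) \<partial>density lborel (\<lambda>t. ennreal (normal_density m 1 t)))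
     \<le> ennreal (1 / sqrt (2 * \<alpha>))"
proof -
  define \<tau> where "\<tau> = 1 / sqrt (2 * \<alpha>)"
  have \<tau>: "0 < \<tau>" using \<alpha> by (simp add: \<tau>_def)
  have \<tau>2: "\<tau>\<^sup>2 = 1 / (2 * \<alpha>)" using \<alpha> by (simp add: \<tau>_def power_divide)
  have pointwise: "normal_density m 1 t * exp (- \<alpha> * t\<^sup>2) \<le> \<tau> * normal_density 0 \<tau> t" for t
  proof -
    have "normal_density m 1 t \<le> 1 / sqrt (2 * pi)"
      unfolding normal_density_def by (simp add: divide_right_mono)
    then have "normal_density m 1 t * exp (- \<alpha> * t\<^sup>2) \<le> 1 / sqrt (2 * pi) * exp (- \<alpha> * t\<^sup>2)"
      by (intro mult_right_mono) auto
    also have "\<dots> = \<tau> * normal_density 0 \<tau> t"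
    proof -
      have e: "- \<alpha> * t\<^sup>2 = - (t - 0)\<^sup>2 / (2 * \<tau>\<^sup>2)" using \<alpha> unfolding \<tau>2 by (simp add: field_simps)
      have c: "\<tau> * (1 / sqrt (2 * pi * \<tau>\<^sup>2)) = 1 / sqrt (2 * pi)"
        using \<tau> by (simp add: real_sqrt_mult)
      show ?thesis unfolding normal_density_def e
        by (simp only: mult.assoc[symmetric] c)
    qed
    finally show ?thesis .
  qed
  have "(\<integral>\<^sup>+ t. ennreal (exp (- \<alpha> * t\<^sup>2)) \<partial>density lborel (\<lambda>t. ennreal (normal_density m 1 t)))
      \<le> (\<integral>\<^sup>+ t. ennreal \<tau> * ennreal (normal_density 0 \<tau> t) \<partial>lborel)"
    using pointwise by (subst nn_integral_density)
      (auto intro!: nn_integral_mono simp: ennreal_mult'[symmetric] less_imp_le[OF \<tau>] ennreal_leI)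
  also have "\<dots> = ennreal \<tau>"
    by (subst nn_integral_cmult) (auto simp: nn_integral_normal_density[OF \<tau>])
  finally show ?thesis by (simp add: \<tau>_def)
qed

lemma nn_integral_exp_linear_std_normal:
  "(\<integral>\<^sup>+ t. ennreal (exp (c * t)) \<partial>std_normal_distribution) = ennreal (exp (c\<^sup>2 / 2))"
proof -
  have pointwise: "normal_density 0 1 t * exp (c * t) = exp (c\<^sup>2 / 2) * normal_density c 1 t" for t
  proof -
    have e: "- (t - 0)\<^sup>2 / (2 * 1\<^sup>2) + c * t = c\<^sup>2 / 2 + (- (t - c)\<^sup>2 / (2 * 1\<^sup>2))"
      by (simp add: field_simps power2_eq_square)
    have "normal_density 0 1 t * exp (c * t)
        = 1 / sqrt (2 * pi * 1\<^sup>2) * exp (- (t - 0)\<^sup>2 / (2 * 1\<^sup>2) + c * t)"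
      unfolding normal_density_def exp_add by (simp only: mult.assoc)
    also have "\<dots> = exp (c\<^sup>2 / 2) * normal_density c 1 t"
      unfolding e normal_density_def exp_add by (simp only: mult_ac)
    finally show ?thesis .
  qed
  have "(\<integral>\<^sup>+ t. ennreal (exp (c * t)) \<partial>std_normal_distribution)
      = (\<integral>\<^sup>+ t. ennreal (exp (c\<^sup>2 / 2)) * ennreal (normal_density c 1 t) \<partial>lborel)"
    by (subst nn_integral_density) (auto simp: ennreal_mult'[symmetric] pointwise)
  also have "\<dots> = ennreal (exp (c\<^sup>2 / 2))"
    by (subst nn_integral_cmult) (auto simp: nn_integral_normal_density)
  finally show ?thesis .
qed

lemma nn_integral_exp_square_eq_gaussian_average:
  assumes M: "sigma_finite_measure M" and h[measurable]: "h \<in> borel_measurable M"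
    and G[measurable]: "G \<in> borel_measurable M" and \<alpha>: "0 \<le> \<alpha>"
  shows "(\<integral>\<^sup>+ \<omega>. ennreal (exp (\<alpha> * (h \<omega>)\<^sup>2)) * G \<omega> \<partial>M)
       = (\<integral>\<^sup>+ z. (\<integral>\<^sup>+ \<omega>. ennreal (exp (sqrt (2 * \<alpha>) * z * h \<omega>)) * G \<omega> \<partial>M) \<partial>std_normal_distribution)"
proof -
  interpret N: prob_space std_normal_distribution by (rule prob_space_normal_density) simp
  interpret P: pair_sigma_finite M std_normal_distribution
    by (intro pair_sigma_finite.intro M N.sigma_finite_measure_axioms)
  have "ennreal (exp (\<alpha> * (h \<omega>)\<^sup>2))
      = (\<integral>\<^sup>+ z. ennreal (exp (sqrt (2 * \<alpha>) * z * h \<omega>)) \<partial>std_normal_distribution)" for \<omega>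
    using nn_integral_exp_linear_std_normal[of "sqrt (2 * \<alpha>) * h \<omega>"] \<alpha>
    by (simp add: power_mult_distrib mult_ac)
  then have "(\<integral>\<^sup>+ \<omega>. ennreal (exp (\<alpha> * (h \<omega>)\<^sup>2)) * G \<omega> \<partial>M)
      = (\<integral>\<^sup>+ \<omega>. (\<integral>\<^sup>+ z. ennreal (exp (sqrt (2 * \<alpha>) * z * h \<omega>)) * G \<omega> \<partial>std_normal_distribution) \<partial>M)"
    by (simp add: nn_integral_multc)
  also have "\<dots> = (\<integral>\<^sup>+ z. (\<integral>\<^sup>+ \<omega>. ennreal (exp (sqrt (2 * \<alpha>) * z * h \<omega>)) * G \<omega> \<partial>M) \<partial>std_normal_distribution)"
    by (rule P.Fubini'[symmetric]) measurable
  finally show ?thesis .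
qed

lemma normal_density_eq_density_std_normal:
  "density lborel (\<lambda>t. ennreal (normal_density c 1 t)) =
   density std_normal_distribution (\<lambda>t. ennreal (exp (c * t - c\<^sup>2 / 2)))"
proof -
  have pointwise: "normal_density 0 1 t * exp (c * t - c\<^sup>2 / 2) = normal_density c 1 t" for t
  proof -
    have e: "- (t - 0)\<^sup>2 / (2 * 1\<^sup>2) + (c * t - c\<^sup>2 / 2) = - (t - c)\<^sup>2 / (2 * 1\<^sup>2)"
      by (simp add: field_simps power2_eq_square)
    show ?thesis unfolding normal_density_def mult.assoc exp_add[symmetric] e ..
  qed
  show ?thesis
    by (subst density_density_eq) (auto simp: ennreal_mult'[symmetric] pointwise)
qed

lemma density_PiM_prod:
  assumes fin: "finite I" and M: "product_sigma_finite M"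
    and D: "product_sigma_finite (\<lambda>i. density (M i) (f i))"
    and f: "\<And>i. i \<in> I \<Longrightarrow> f i \<in> borel_measurable (M i)"
  shows "density (PiM I M) (\<lambda>\<theta>. \<Prod>i\<in>I. f i (\<theta> i)) = PiM I (\<lambda>i. density (M i) (f i))"
proof -
  interpret M: product_sigma_finite M by (rule M)
  interpret D: product_sigma_finite "\<lambda>i. density (M i) (f i)" by (rule D)
  have [measurable]: "(\<lambda>\<theta>. \<Prod>i\<in>I. f i (\<theta> i)) \<in> borel_measurable (PiM I M)"
  proof (rule borel_measurable_prod_ennreal)
    fix i assume "i \<in> I"
    then show "(\<lambda>\<theta>. f i (\<theta> i)) \<in> borel_measurable (PiM I M)"
      using f by (intro measurable_compose[OF measurable_component_singleton]) auto
  qed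
  show ?thesis
  proof (rule D.PiM_eqI[OF fin])
    show "sets (density (PiM I M) (\<lambda>\<theta>. \<Prod>i\<in>I. f i (\<theta> i))) = sets (PiM I (\<lambda>i. density (M i) (f i)))"
      by (simp, intro sets_PiM_cong) auto
  next
    fix A assume "\<And>i. i \<in> I \<Longrightarrow> A i \<in> sets (density (M i) (f i))"
    then have A: "A i \<in> sets (M i)" if "i \<in> I" for i using that by simp
    have "emeasure (density (PiM I M) (\<lambda>\<theta>. \<Prod>i\<in>I. f i (\<theta> i))) (Pi\<^sub>E I A)
        = (\<integral>\<^sup>+ \<theta>. (\<Prod>i\<in>I. f i (\<theta> i)) * indicator (Pi\<^sub>E I A) \<theta> \<partial>PiM I M)"
      by (rule emeasure_density) (use A in \<open>auto intro!: sets_PiM_I_finite fin\<close>)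
    also have "\<dots> = (\<integral>\<^sup>+ \<theta>. (\<Prod>i\<in>I. f i (\<theta> i) * indicator (A i) (\<theta> i)) \<partial>PiM I M)"
    proof (rule nn_integral_cong)
      fix \<theta> assume "\<theta> \<in> space (PiM I M)"
      then have "\<theta> \<in> extensional I" by (simp add: space_PiM PiE_def)
      then have "indicator (Pi\<^sub>E I A) \<theta> = (\<Prod>i\<in>I. indicator (A i) (\<theta> i) :: ennreal)"
        by (simp add: indicator_def PiE_def Pi_def prod_eq_1_iff fin) (auto simp: fin)
      then show "(\<Prod>i\<in>I. f i (\<theta> i)) * indicator (Pi\<^sub>E I A) \<theta>
          = (\<Prod>i\<in>I. f i (\<theta> i) * indicator (A i) (\<theta> i))"
        by (simp add: prod.distrib)
    qed
    also have "\<dots> = (\<Prod>i\<in>I. \<integral>\<^sup>+ t. f i t * indicator (A i) t \<partial>M i)"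
      by (rule M.product_nn_integral_prod[OF fin]) (use A f in auto)
    also have "\<dots> = (\<Prod>i\<in>I. emeasure (density (M i) (f i)) (A i))"
      by (intro prod.cong refl emeasure_density[symmetric]) (use A f in auto)
    finally show "emeasure (density (PiM I M) (\<lambda>\<theta>. \<Prod>i\<in>I. f i (\<theta> i))) (Pi\<^sub>E I A)
        = (\<Prod>i\<in>I. emeasure (density (M i) (f i)) (A i))" .
  qed
qed

lemma (in prob_space) prob_sum_gt_le_indep:
  fixes Y :: "'j \<Rightarrow> 'a \<Rightarrow> real"
  assumes L: "finite L" and ind: "indep_vars (\<lambda>_. borel) Y L" and s: "0 \<le> s"
    and mgf: "\<And>j. j \<in> L \<Longrightarrow> (\<integral>\<^sup>+ \<omega>. ennreal (exp (s * Y j \<omega>)) \<partial>M) \<le> ennreal (exp m)"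
  shows "prob {\<omega> \<in> space M. c < (\<Sum>j\<in>L. Y j \<omega>)} \<le> exp (real (card L) * m - s * c)"
proof -
  have [measurable]: "Y j \<in> borel_measurable M" if "j \<in> L" for j
    using ind that by (auto simp: indep_vars_def)
  let ?A = "{\<omega> \<in> space M. c < (\<Sum>j\<in>L. Y j \<omega>)}"
  have factor: "exp (s * ((\<Sum>j\<in>L. Y j \<omega>) - c)) = exp (- s * c) * (\<Prod>j\<in>L. exp (s * Y j \<omega>))" for \<omega>
    by (simp add: exp_sum[OF L, symmetric] exp_add[symmetric] sum_distrib_left algebra_simps)
  have "emeasure M ?A = (\<integral>\<^sup>+ \<omega>. indicator ?A \<omega> \<partial>M)"
    by (intro nn_integral_indicator[symmetric]) measurable
  also have "\<dots> \<le> (\<integral>\<^sup>+ \<omega>. ennreal (exp (- s * c)) * (\<Prod>j\<in>L. ennreal (exp (s * Y j \<omega>))) \<partial>M)"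
  proof (intro nn_integral_mono)
    fix \<omega>
    have "indicator ?A \<omega> \<le> ennreal (exp (s * ((\<Sum>j\<in>L. Y j \<omega>) - c)))"
      using s by (auto simp: indicator_def intro!: ennreal_leI)
    then show "indicator ?A \<omega> \<le> ennreal (exp (- s * c)) * (\<Prod>j\<in>L. ennreal (exp (s * Y j \<omega>)))"
      by (simp add: factor ennreal_mult' prod_ennreal)
  qed
  also have "\<dots> = ennreal (exp (- s * c)) * (\<Prod>j\<in>L. \<integral>\<^sup>+ \<omega>. ennreal (exp (s * Y j \<omega>)) \<partial>M)"
  proof -
    have "indep_vars (\<lambda>_. borel) (\<lambda>j \<omega>. ennreal (exp (s * Y j \<omega>))) L"
      using indep_vars_compose2[OF ind, of "\<lambda>j t. ennreal (exp (s * t))" "\<lambda>_. borel"] by simp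
    then have "(\<integral>\<^sup>+ \<omega>. (\<Prod>j\<in>L. ennreal (exp (s * Y j \<omega>))) \<partial>M)
        = (\<Prod>j\<in>L. \<integral>\<^sup>+ \<omega>. ennreal (exp (s * Y j \<omega>)) \<partial>M)"
      by (rule indep_vars_nn_integral[OF L]) simp
    then show ?thesis
      by (subst nn_integral_cmult) auto
  qed
  also have "\<dots> \<le> ennreal (exp (- s * c)) * (\<Prod>j\<in>L. ennreal (exp m))"
    by (intro mult_left_mono prod_mono_ennreal mgf) auto
  also have "\<dots> = ennreal (exp (real (card L) * m - s * c))"
  proof -
    have "exp (real (card L) * m - s * c) = exp (- s * c) * exp m ^ card L"
      by (simp add: exp_add[symmetric] exp_of_nat_mult[symmetric] algebra_simps)
    then show ?thesis
      by (simp add: ennreal_mult' ennreal_power)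
  qed
  finally show ?thesis
    by (simp add: emeasure_eq_measure)
qed

section \<open>Standard Gaussian vectors\<close>

definition gauss_vector :: "'i set \<Rightarrow> ('i \<Rightarrow> real) \<Rightarrow> ('i \<Rightarrow> real) measure" where
  "gauss_vector I \<mu> = PiM I (\<lambda>i. density lborel (\<lambda>t. ennreal (normal_density (\<mu> i) 1 t)))"

lemma prob_space_gauss_vector: "prob_space (gauss_vector I \<mu>)"
  unfolding gauss_vector_def by (intro prob_space_PiM prob_space_normal_density) simp

lemma sets_gauss_vector: "sets (gauss_vector I \<mu>) = sets (PiM I (\<lambda>_. borel))"
  unfolding gauss_vector_def by (intro sets_PiM_cong) auto

lemma measurable_gauss_vector_iff:
  "measurable (gauss_vector I \<mu>) N = measurable (PiM I (\<lambda>_. borel)) N"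
  by (rule measurable_cong_sets[OF sets_gauss_vector refl])

lemma distributed_component_gauss_vector:
  assumes "i \<in> I"
  shows "distributed (gauss_vector I \<mu>) lborel (\<lambda>\<theta>. \<theta> i) (normal_density (\<mu> i) 1)"
proof -
  let ?N = "density lborel (\<lambda>t. ennreal (normal_density (\<mu> i) 1 t))"
  have meas: "(\<lambda>\<theta>. \<theta> i) \<in> measurable (gauss_vector I \<mu>) lborel"
    unfolding measurable_gauss_vector_iff using assms by measurable
  have "distr (gauss_vector I \<mu>) lborel (\<lambda>\<theta>. \<theta> i) = distr (gauss_vector I \<mu>) ?N (\<lambda>\<theta>. \<theta> i)"
    by (rule distr_cong) auto
  also have "\<dots> = ?N"
    unfolding gauss_vector_def by (intro distr_PiM_component prob_space_normal_density assms) simp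
  finally show ?thesis
    unfolding distributed_def using meas by simp
qed

lemma nn_integral_exp_square_component:
  assumes "i \<in> I" and "2 * s < 1"
  shows "(\<integral>\<^sup>+ \<theta>. ennreal (exp (s * (\<theta> i)\<^sup>2)) \<partial>gauss_vector I (\<lambda>_. 0)) = ennreal (1 / sqrt (1 - 2 * s))"
  using nn_integral_distributed_eq[OF distributed_component_gauss_vector[OF assms(1)],
      of "\<lambda>t. ennreal (exp (s * t\<^sup>2))"]
    nn_integral_exp_square_normal[of 1 s] assms(2)
  by simp

lemma indep_components_gauss_vector:
  assumes "I \<noteq> {}"
  shows "prob_space.indep_vars (gauss_vector I \<mu>) (\<lambda>_. borel) (\<lambda>i \<theta>. \<theta> i) I"
proof -
  interpret prob_space "gauss_vector I \<mu>" by (rule prob_space_gauss_vector)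
  let ?N = "\<lambda>i. density lborel (\<lambda>t. ennreal (normal_density (\<mu> i) 1 t))"
  have rv: "random_variable (?N i) (\<lambda>\<theta>. \<theta> i)" if "i \<in> I" for i
    unfolding measurable_gauss_vector_iff using that by (simp cong: measurable_cong_sets) measurable
  have "distr (gauss_vector I \<mu>) (\<Pi>\<^sub>M i\<in>I. ?N i) (\<lambda>\<theta>. \<lambda>i\<in>I. \<theta> i)
      = distr (gauss_vector I \<mu>) (gauss_vector I \<mu>) (\<lambda>\<theta>. \<theta>)"
    by (intro distr_cong) (auto simp: gauss_vector_def space_PiM PiE_def extensional_restrict)
  also have "\<dots> = (\<Pi>\<^sub>M i\<in>I. distr (gauss_vector I \<mu>) (?N i) (\<lambda>\<theta>. \<theta> i))"
    unfolding distr_id gauss_vector_def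
    by (intro PiM_cong refl distr_PiM_component[symmetric] prob_space_normal_density) auto
  finally have "indep_vars ?N (\<lambda>i \<theta>. \<theta> i) I"
    using indep_vars_iff_distr_eq_PiM'[OF assms rv] by simp
  then show ?thesis
    unfolding indep_vars_def by (simp cong: measurable_cong_sets)
qed

lemma indep_vars_local_gauss_vector:
  assumes I: "I \<noteq> {}" and B: "\<And>j. j \<in> L \<Longrightarrow> B j \<subseteq> I" and disj: "disjoint_family_on B L"
    and F: "\<And>j. j \<in> L \<Longrightarrow> F j \<in> borel_measurable (PiM (B j) (\<lambda>_. borel))"
    and local: "\<And>j \<theta>. j \<in> L \<Longrightarrow> F j (restrict \<theta> (B j)) = F j \<theta>"
  shows "prob_space.indep_vars (gauss_vector I \<mu>) (\<lambda>_. borel) F L"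
proof -
  interpret prob_space "gauss_vector I \<mu>" by (rule prob_space_gauss_vector)
  have "indep_vars (\<lambda>j. PiM (B j) (\<lambda>_. borel)) (\<lambda>j \<theta>. restrict (\<lambda>i. \<theta> i) (B j)) L"
    by (rule indep_vars_restrict[OF indep_components_gauss_vector[OF I] B disj])
  then have "indep_vars (\<lambda>_. borel) (\<lambda>j \<theta>. F j (restrict (\<lambda>i. \<theta> i) (B j))) L"
    by (rule indep_vars_compose2) (rule F)
  then show ?thesis
    by (rule iffD1[OF indep_vars_cong, rotated 3]) (simp_all add: local)
qed

lemma distributed_linear_gauss_vector:
  assumes fin: "finite I" and pos: "0 < (\<Sum>i\<in>I. (a i)\<^sup>2)"
  shows "distributed (gauss_vector I \<mu>) lborel (\<lambda>\<theta>. \<Sum>i\<in>I. a i * \<theta> i)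
           (normal_density (\<Sum>i\<in>I. a i * \<mu> i) (sqrt (\<Sum>i\<in>I. (a i)\<^sup>2)))"
proof -
  interpret prob_space "gauss_vector I \<mu>" by (rule prob_space_gauss_vector)
  define K where "K = {i\<in>I. a i \<noteq> 0}"
  have K: "finite K" "K \<subseteq> I" using fin by (auto simp: K_def)
  have "K \<noteq> {}"
  proof
    assume "K = {}"
    then have "\<forall>i\<in>I. (a i)\<^sup>2 = 0" by (auto simp: K_def)
    then show False using pos by simp
  qed
  have restrict_sum: "(\<Sum>i\<in>I. f i) = (\<Sum>i\<in>K. f i)" if "\<And>i. a i = 0 \<Longrightarrow> f i = 0" for f :: "_ \<Rightarrow> real"
    by (rule sum.mono_neutral_right[OF fin K(2)]) (auto simp: K_def that)
  have ind: "indep_vars (\<lambda>_. borel) (\<lambda>i \<theta>. a i * \<theta> i) K"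
    by (rule indep_vars_compose2[OF indep_vars_subset[OF indep_components_gauss_vector]])
       (use K \<open>K \<noteq> {}\<close> in auto)
  have "distributed (gauss_vector I \<mu>) lborel (\<lambda>\<theta>. 0 + a i * \<theta> i)
          (normal_density (0 + a i * \<mu> i) (\<bar>a i\<bar> * 1))" if "i \<in> K" for i
    by (rule normal_density_affine[OF distributed_component_gauss_vector])
       (use that K in \<open>auto simp: K_def\<close>)
  then have "distributed (gauss_vector I \<mu>) lborel (\<lambda>\<theta>. \<Sum>i\<in>K. a i * \<theta> i)
           (normal_density (\<Sum>i\<in>K. a i * \<mu> i) (sqrt (\<Sum>i\<in>K. \<bar>a i\<bar>\<^sup>2)))"
    by (intro sum_indep_normal[OF K(1) \<open>K \<noteq> {}\<close> ind]) (auto simp: K_def)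
  then show ?thesis
    by (simp add: restrict_sum)
qed

lemma gauss_vector_eq_density:
  assumes fin: "finite I"
  shows "gauss_vector I c = density (gauss_vector I (\<lambda>_. 0))
           (\<lambda>\<theta>. ennreal (\<Prod>i\<in>I. exp (c i * \<theta> i - (c i)\<^sup>2 / 2)))"
proof -
  let ?f = "\<lambda>i t. ennreal (exp (c i * t - (c i)\<^sup>2 / 2))"
  have "gauss_vector I c = PiM I (\<lambda>i. density std_normal_distribution (?f i))"
    unfolding gauss_vector_def by (intro PiM_cong refl normal_density_eq_density_std_normal)
  also have "\<dots> = density (PiM I (\<lambda>_. std_normal_distribution)) (\<lambda>\<theta>. \<Prod>i\<in>I. ?f i (\<theta> i))"
    by (rule density_PiM_prod[symmetric, OF fin])
       (simp_all add: product_sigma_finite_def prob_space_imp_sigma_finite prob_space_normal_density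
         flip: normal_density_eq_density_std_normal)
  also have "\<dots> = density (gauss_vector I (\<lambda>_. 0)) (\<lambda>\<theta>. ennreal (\<Prod>i\<in>I. exp (c i * \<theta> i - (c i)\<^sup>2 / 2)))"
    unfolding gauss_vector_def by (simp add: prod_ennreal)
  finally show ?thesis .
qed

lemma nn_integral_exp_linear_gauss_vector:
  assumes fin: "finite I" and F: "F \<in> borel_measurable (PiM I (\<lambda>_. borel))"
  shows "(\<integral>\<^sup>+ \<theta>. ennreal (exp (\<Sum>i\<in>I. c i * \<theta> i)) * F \<theta> \<partial>gauss_vector I (\<lambda>_. 0))
       = ennreal (exp (\<Sum>i\<in>I. (c i)\<^sup>2 / 2)) * (\<integral>\<^sup>+ \<theta>. F \<theta> \<partial>gauss_vector I c)"
proof -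
  let ?M0 = "gauss_vector I (\<lambda>_. 0)"
  let ?E = "\<lambda>\<theta>. exp (\<Sum>i\<in>I. c i * \<theta> i)"
  let ?Z = "exp (\<Sum>i\<in>I. (c i)\<^sup>2 / 2)"
  have [measurable]: "(\<lambda>\<theta>. \<theta> i) \<in> borel_measurable ?M0" if "i \<in> I" for i
    unfolding measurable_gauss_vector_iff using that by measurable
  have F'[measurable]: "F \<in> borel_measurable ?M0"
    unfolding measurable_gauss_vector_iff by (rule F)
  have density: "(\<Prod>i\<in>I. exp (c i * \<theta> i - (c i)\<^sup>2 / 2)) = ?E \<theta> / ?Z" for \<theta>
  proof -
    have "(\<Prod>i\<in>I. exp (c i * \<theta> i - (c i)\<^sup>2 / 2)) = exp (\<Sum>i\<in>I. c i * \<theta> i - (c i)\<^sup>2 / 2)"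
      by (rule exp_sum[OF fin, symmetric])
    then show ?thesis by (simp only: sum_subtractf exp_diff)
  qed
  have scale: "ennreal (?E \<theta> / ?Z) = ennreal (1 / ?Z) * ennreal (?E \<theta>)" for \<theta>
    by (simp add: ennreal_mult[symmetric])
  have "(\<integral>\<^sup>+ \<theta>. F \<theta> \<partial>gauss_vector I c) = (\<integral>\<^sup>+ \<theta>. ennreal (?E \<theta> / ?Z) * F \<theta> \<partial>?M0)"
    unfolding gauss_vector_eq_density[OF fin, of c] density
    by (rule nn_integral_density) measurable
  also have "\<dots> = ennreal (1 / ?Z) * (\<integral>\<^sup>+ \<theta>. ennreal (?E \<theta>) * F \<theta> \<partial>?M0)"
    unfolding scale mult.assoc by (rule nn_integral_cmult) measurable
  finally show ?thesis
    by (simp add: mult.assoc[symmetric] ennreal_mult[symmetric])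
qed

section \<open>Preactivations\<close>

lemma vnorm_nonneg: "0 \<le> vnorm d y"
  unfolding vnorm_def by (simp add: sum_nonneg)

lemma power2_vnorm: "(vnorm d y)\<^sup>2 = (\<Sum>k<d. (y k)\<^sup>2)"
  unfolding vnorm_def by (simp add: sum_nonneg)

lemma vnorm_eq_0_component: "vnorm d y = 0 \<Longrightarrow> k < d \<Longrightarrow> y k = 0"
  using power2_vnorm[of d y] by (auto simp: sum_nonneg_eq_0_iff)

lemma relu_abs_diff_le: "\<bar>relu a - relu b\<bar> \<le> \<bar>a - b\<bar>"
  unfolding relu_def by auto

lemma relu_measurable[measurable]: "relu \<in> borel_measurable borel"
  unfolding relu_def by measurable

lemma relu_deriv_measurable[measurable]: "relu_deriv \<in> borel_measurable borel"
  unfolding relu_deriv_def by measurable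

definition weight_index :: "nat \<Rightarrow> nat \<Rightarrow> (nat \<times> nat + nat) set" where
  "weight_index d j = Inl ` ({j} \<times> {..<d})"

definition neuron_index :: "nat \<Rightarrow> nat \<Rightarrow> (nat \<times> nat + nat) set" where
  "neuron_index d j = insert (Inr j) (weight_index d j)"

definition weight_coeff :: "nat \<Rightarrow> nat \<Rightarrow> (nat \<Rightarrow> real) \<Rightarrow> nat \<times> nat + nat \<Rightarrow> real" where
  "weight_coeff d j y i = (case i of Inl (j', k) \<Rightarrow> if j' = j \<and> k < d then y k else 0 | Inr _ \<Rightarrow> 0)"

lemma finite_param_index: "finite (param_index d1 d)"
  unfolding param_index_def by auto

lemma neuron_index_subset_param_index: "j < d1 \<Longrightarrow> neuron_index d j \<subseteq> param_index d1 d"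
  unfolding neuron_index_def weight_index_def param_index_def by auto

lemma weight_index_subset_neuron_index: "weight_index d j \<subseteq> neuron_index d j"
  unfolding neuron_index_def by auto

lemma param_measure_eq_gauss_vector: "param_measure d1 d = gauss_vector (param_index d1 d) (\<lambda>_. 0)"
  unfolding param_measure_def gauss_vector_def std_gauss_def ..

lemma sum_weight_index: "(\<Sum>i\<in>weight_index d j. f i) = (\<Sum>k<d. f (Inl (j, k)))"
proof -
  have "weight_index d j = (\<lambda>k. Inl (j, k)) ` {..<d}"
    unfolding weight_index_def by auto
  then show ?thesis
    by (simp add: sum.reindex inj_on_def)
qed

lemma sum_weight_coeff:
  assumes "finite I" and "weight_index d j \<subseteq> I"
    and f0: "f 0 = 0"
  shows "(\<Sum>i\<in>I. f (weight_coeff d j y i)) = (\<Sum>k<d. f (y k))"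
proof -
  have "(\<Sum>i\<in>I. f (weight_coeff d j y i)) = (\<Sum>i\<in>weight_index d j. f (weight_coeff d j y i))"
    by (rule sum.mono_neutral_right[OF assms(1,2)])
       (auto simp: weight_coeff_def weight_index_def f0 split: sum.split)
  also have "\<dots> = (\<Sum>k<d. f (y k))"
    by (simp add: sum_weight_index weight_coeff_def)
  finally show ?thesis .
qed

lemma preact_eq_sum_weight_coeff:
  assumes "finite I" and "weight_index d j \<subseteq> I"
  shows "preact d \<theta> j y = (\<Sum>i\<in>I. weight_coeff d j y i * \<theta> i)"
proof -
  have "(\<Sum>i\<in>I. weight_coeff d j y i * \<theta> i) = (\<Sum>i\<in>weight_index d j. weight_coeff d j y i * \<theta> i)"
    by (rule sum.mono_neutral_right[OF assms])
       (auto simp: weight_coeff_def weight_index_def split: sum.split)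
  then show ?thesis
    by (simp add: sum_weight_index weight_coeff_def preact_def mult.commute)
qed

lemma sum_weight_coeff_square:
  assumes "finite I" and "weight_index d j \<subseteq> I"
  shows "(\<Sum>i\<in>I. (weight_coeff d j y i)\<^sup>2) = (vnorm d y)\<^sup>2"
  using sum_weight_coeff[OF assms, of "\<lambda>a. a\<^sup>2"] by (simp add: power2_vnorm)

lemma preact_diff: "preact d \<theta> j x - preact d \<theta> j x' = preact d \<theta> j (\<lambda>k. x k - x' k)"
  unfolding preact_def by (simp add: sum_subtractf[symmetric] algebra_simps)

lemma preact_eq_0: "vnorm d y = 0 \<Longrightarrow> preact d \<theta> j y = 0"
  unfolding preact_def by (auto simp: vnorm_eq_0_component)

lemma preact_restrict: "weight_index d j \<subseteq> B \<Longrightarrow> preact d (restrict \<theta> B) j y = preact d \<theta> j y"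
  unfolding preact_def weight_index_def by (intro sum.cong) auto

lemma borel_measurable_preact:
  assumes "weight_index d j \<subseteq> I"
  shows "(\<lambda>\<theta>. preact d \<theta> j y) \<in> borel_measurable (PiM I (\<lambda>_. borel))"
  unfolding preact_def
  by (intro borel_measurable_sum borel_measurable_times borel_measurable_const measurable_component_singleton)
     (use assms in \<open>auto simp: weight_index_def\<close>)

lemma borel_measurable_preact_gauss_vector[measurable]:
  "weight_index d j \<subseteq> I \<Longrightarrow> (\<lambda>\<theta>. preact d \<theta> j y) \<in> borel_measurable (gauss_vector I \<mu>)"
  unfolding measurable_gauss_vector_iff by (rule borel_measurable_preact)

lemma distributed_preact:
  assumes "finite I" and "weight_index d j \<subseteq> I" and "0 < vnorm d y"
  shows "distributed (gauss_vector I \<mu>) lborel (\<lambda>\<theta>. preact d \<theta> j y)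
           (normal_density (preact d \<mu> j y) (vnorm d y))"
  using distributed_linear_gauss_vector[OF assms(1), of "weight_coeff d j y" \<mu>] assms vnorm_nonneg[of d y]
  by (simp add: preact_eq_sum_weight_coeff[OF assms(1,2)] sum_weight_coeff_square)

lemma nn_integral_exp_square_preact:
  assumes fin: "finite I" and W: "weight_index d j \<subseteq> I" and s: "2 * s * (vnorm d y)\<^sup>2 < 1"
  shows "(\<integral>\<^sup>+ \<theta>. ennreal (exp (s * (preact d \<theta> j y)\<^sup>2)) \<partial>gauss_vector I (\<lambda>_. 0))
       = ennreal (1 / sqrt (1 - 2 * s * (vnorm d y)\<^sup>2))"
proof (cases "vnorm d y = 0")
  case True
  interpret prob_space "gauss_vector I (\<lambda>_. 0)" by (rule prob_space_gauss_vector)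
  show ?thesis using True emeasure_space_1 by (simp add: preact_eq_0)
next
  case False
  then have pos: "0 < vnorm d y" using vnorm_nonneg[of d y] by simp
  have "preact d (\<lambda>_. 0) j y = 0" unfolding preact_def by simp
  then show ?thesis
    using nn_integral_distributed_eq[OF distributed_preact[OF fin W pos, of "\<lambda>_. 0"],
        of "\<lambda>t. ennreal (exp (s * t\<^sup>2))"] nn_integral_exp_square_normal[OF pos s]
    by simp
qed

section \<open>Gate flips\<close>

definition gate_flip :: "nat \<Rightarrow> nat \<Rightarrow> (nat \<Rightarrow> real) \<Rightarrow> (nat \<Rightarrow> real) \<Rightarrow> (nat \<times> nat + nat \<Rightarrow> real) \<Rightarrow> real" where
  "gate_flip d j x x' \<theta> = of_bool (relu_deriv (preact d \<theta> j x) \<noteq> relu_deriv (preact d \<theta> j x'))"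

lemma gate_flip_le_exp:
  assumes "0 \<le> \<alpha>"
  shows "gate_flip d j x x' \<theta>
           \<le> exp (\<alpha> * (preact d \<theta> j (\<lambda>k. x k - x' k))\<^sup>2) * exp (- \<alpha> * (preact d \<theta> j x)\<^sup>2)"
proof (cases "relu_deriv (preact d \<theta> j x) = relu_deriv (preact d \<theta> j x')")
  case True
  then show ?thesis by (simp add: gate_flip_def)
next
  case False
  define g where "g = preact d \<theta> j x"
  define h where "h = preact d \<theta> j (\<lambda>k. x k - x' k)"
  have "preact d \<theta> j x' = g - h"
    unfolding g_def h_def preact_diff[symmetric] by simp
  then have "(0 < g) \<noteq> (0 < g - h)"
    using False by (auto simp: relu_deriv_def g_def split: if_splits)
  then have "\<bar>g\<bar> \<le> \<bar>h\<bar>" by auto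
  then have "\<alpha> * g\<^sup>2 \<le> \<alpha> * h\<^sup>2"
    using assms by (intro mult_left_mono) (auto simp: abs_le_square_iff)
  then have "1 \<le> exp (\<alpha> * h\<^sup>2) * exp (- \<alpha> * g\<^sup>2)"
    by (simp add: exp_add[symmetric])
  then show ?thesis
    using False by (simp add: gate_flip_def g_def h_def)
qed

lemma gate_flip_restrict:
  "weight_index d j \<subseteq> B \<Longrightarrow> gate_flip d j x x' (restrict \<theta> B) = gate_flip d j x x' \<theta>"
  unfolding gate_flip_def by (simp add: preact_restrict)

lemma borel_measurable_gate_flip:
  assumes "weight_index d j \<subseteq> I"
  shows "gate_flip d j x x' \<in> borel_measurable (PiM I (\<lambda>_. borel))"
proof -
  have gate: "(\<lambda>\<theta>. relu_deriv (preact d \<theta> j y)) \<in> borel_measurable (PiM I (\<lambda>_. borel))" for y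
    by (rule measurable_compose[OF borel_measurable_preact[OF assms] relu_deriv_measurable])
  have [measurable]: "Measurable.pred (PiM I (\<lambda>_. borel))
      (\<lambda>\<theta>. relu_deriv (preact d \<theta> j x) = relu_deriv (preact d \<theta> j x'))"
    unfolding pred_def by (rule borel_measurable_eq[OF gate gate])
  show ?thesis
    unfolding gate_flip_def[abs_def] of_bool_def by measurable
qed

lemma nn_integral_exp_preact_neg_square_le:
  assumes fin: "finite I" and W: "weight_index d j \<subseteq> I" and x: "vnorm d x = 1" and \<alpha>: "0 < \<alpha>"
  shows "(\<integral>\<^sup>+ \<theta>. ennreal (exp (t * preact d \<theta> j u)) * ennreal (exp (- \<alpha> * (preact d \<theta> j x)\<^sup>2))
            \<partial>gauss_vector I (\<lambda>_. 0))
       \<le> ennreal (exp (t\<^sup>2 * (vnorm d u)\<^sup>2 / 2)) * ennreal (1 / sqrt (2 * \<alpha>))"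
proof -
  define c where "c i = t * weight_coeff d j u i" for i
  have [measurable]: "(\<lambda>\<theta>. preact d \<theta> j x) \<in> borel_measurable (PiM I (\<lambda>_. borel))"
    by (rule borel_measurable_preact[OF W])
  have lin: "(\<Sum>i\<in>I. c i * \<theta> i) = t * preact d \<theta> j u" for \<theta>
    by (simp add: c_def preact_eq_sum_weight_coeff[OF fin W] sum_distrib_left mult.assoc)
  have "(\<Sum>i\<in>I. (c i)\<^sup>2 / 2) = t\<^sup>2 / 2 * (\<Sum>i\<in>I. (weight_coeff d j u i)\<^sup>2)"
    by (simp add: c_def power_mult_distrib sum_distrib_left)
  also have "\<dots> = t\<^sup>2 * (vnorm d u)\<^sup>2 / 2"
    by (simp add: sum_weight_coeff_square[OF fin W])
  finally have quad: "(\<Sum>i\<in>I. (c i)\<^sup>2 / 2) = t\<^sup>2 * (vnorm d u)\<^sup>2 / 2" .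
  have "(\<integral>\<^sup>+ \<theta>. ennreal (exp (t * preact d \<theta> j u)) * ennreal (exp (- \<alpha> * (preact d \<theta> j x)\<^sup>2))
            \<partial>gauss_vector I (\<lambda>_. 0))
      = ennreal (exp (t\<^sup>2 * (vnorm d u)\<^sup>2 / 2))
          * (\<integral>\<^sup>+ \<theta>. ennreal (exp (- \<alpha> * (preact d \<theta> j x)\<^sup>2)) \<partial>gauss_vector I c)"
    using nn_integral_exp_linear_gauss_vector[OF fin, of "\<lambda>\<theta>. ennreal (exp (- \<alpha> * (preact d \<theta> j x)\<^sup>2))" c]
    by (simp add: lin quad)
  also have "(\<integral>\<^sup>+ \<theta>. ennreal (exp (- \<alpha> * (preact d \<theta> j x)\<^sup>2)) \<partial>gauss_vector I c)
      = (\<integral>\<^sup>+ s. ennreal (exp (- \<alpha> * s\<^sup>2)) \<partial>density lborel (normal_density (preact d c j x) 1))"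
    using nn_integral_distributed_eq[OF distributed_preact[OF fin W, of x c],
        of "\<lambda>s. ennreal (exp (- \<alpha> * s\<^sup>2))"] x by simp
  also have "\<dots> \<le> ennreal (1 / sqrt (2 * \<alpha>))"
    by (rule nn_integral_exp_neg_square_normal_le[OF \<alpha>])
  finally show ?thesis
    by (simp add: mult_left_mono)
qed

text \<open>Writing \<open>exp (\<alpha> (w \<bullet> (x - x'))\<^sup>2)\<close> as a Gaussian average of \<open>exp (\<surd>(2\<alpha>) z (w \<bullet> (x - x')))\<close>
  and absorbing that factor into a shift of the mean of \<open>w\<close> (Cameron--Martin) leaves \<open>w \<bullet> x\<close> a
  unit-variance Gaussian, against which \<open>exp (- \<alpha> (w \<bullet> x)\<^sup>2)\<close> integrates to at most \<open>1 / \<surd>(2\<alpha>)\<close>.\<close>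

lemma nn_integral_gate_flip_le_sqrt:
  assumes fin: "finite I" and W: "weight_index d j \<subseteq> I" and x: "vnorm d x = 1"
    and \<alpha>: "0 < \<alpha>" and \<alpha>\<nu>: "2 * \<alpha> * (vnorm d (\<lambda>k. x k - x' k))\<^sup>2 < 1"
  shows "(\<integral>\<^sup>+ \<theta>. ennreal (gate_flip d j x x' \<theta>) \<partial>gauss_vector I (\<lambda>_. 0))
       \<le> ennreal (1 / sqrt (1 - 2 * \<alpha> * (vnorm d (\<lambda>k. x k - x' k))\<^sup>2)) * ennreal (1 / sqrt (2 * \<alpha>))"
proof -
  define u where "u = (\<lambda>k. x k - x' k)"
  define \<nu> where "\<nu> = vnorm d u"
  define r where "r = sqrt (2 * \<alpha>)"
  let ?M0 = "gauss_vector I (\<lambda>_. 0)"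
  let ?h = "\<lambda>\<theta>. preact d \<theta> j u"
  let ?g = "\<lambda>\<theta>. preact d \<theta> j x"
  interpret M0: prob_space ?M0 by (rule prob_space_gauss_vector)
  note [measurable] = borel_measurable_preact_gauss_vector[OF W]
  have "ennreal (gate_flip d j x x' \<theta>) \<le> ennreal (exp (\<alpha> * (?h \<theta>)\<^sup>2)) * ennreal (exp (- \<alpha> * (?g \<theta>)\<^sup>2))"
    for \<theta>
    using gate_flip_le_exp[OF less_imp_le[OF \<alpha>], of d j x x' \<theta>]
    by (simp add: u_def ennreal_mult'[symmetric] ennreal_leI)
  then have "(\<integral>\<^sup>+ \<theta>. ennreal (gate_flip d j x x' \<theta>) \<partial>?M0)
      \<le> (\<integral>\<^sup>+ \<theta>. ennreal (exp (\<alpha> * (?h \<theta>)\<^sup>2)) * ennreal (exp (- \<alpha> * (?g \<theta>)\<^sup>2)) \<partial>?M0)"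
    by (intro nn_integral_mono)
  also have "\<dots> = (\<integral>\<^sup>+ z. (\<integral>\<^sup>+ \<theta>. ennreal (exp (r * z * ?h \<theta>)) * ennreal (exp (- \<alpha> * (?g \<theta>)\<^sup>2)) \<partial>?M0)
                        \<partial>std_normal_distribution)"
    unfolding r_def using \<alpha>
    by (intro nn_integral_exp_square_eq_gaussian_average M0.sigma_finite_measure_axioms) auto
  also have "\<dots> \<le> (\<integral>\<^sup>+ z. ennreal (exp (\<alpha> * \<nu>\<^sup>2 * z\<^sup>2)) * ennreal (1 / sqrt (2 * \<alpha>)) \<partial>std_normal_distribution)"
  proof (rule nn_integral_mono)
    fix z
    have "(r * z)\<^sup>2 * (vnorm d u)\<^sup>2 / 2 = \<alpha> * \<nu>\<^sup>2 * z\<^sup>2"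
      using \<alpha> by (simp add: r_def \<nu>_def power_mult_distrib)
    then show "(\<integral>\<^sup>+ \<theta>. ennreal (exp (r * z * ?h \<theta>)) * ennreal (exp (- \<alpha> * (?g \<theta>)\<^sup>2)) \<partial>?M0)
        \<le> ennreal (exp (\<alpha> * \<nu>\<^sup>2 * z\<^sup>2)) * ennreal (1 / sqrt (2 * \<alpha>))"
      using nn_integral_exp_preact_neg_square_le[OF fin W x \<alpha>, of "r * z" u] by (simp only:)
  qed
  also have "\<dots> = (\<integral>\<^sup>+ z. ennreal (exp (\<alpha> * \<nu>\<^sup>2 * z\<^sup>2)) \<partial>std_normal_distribution)
                  * ennreal (1 / sqrt (2 * \<alpha>))"
    by (rule nn_integral_multc) measurable
  also have "(\<integral>\<^sup>+ z. ennreal (exp (\<alpha> * \<nu>\<^sup>2 * z\<^sup>2)) \<partial>std_normal_distribution)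
      = ennreal (1 / sqrt (1 - 2 * (\<alpha> * \<nu>\<^sup>2) * 1\<^sup>2))"
    by (rule nn_integral_exp_square_normal) (use \<alpha>\<nu> in \<open>auto simp: \<nu>_def u_def\<close>)
  finally show ?thesis
    by (simp add: \<nu>_def u_def mult.assoc)
qed

lemma nn_integral_gate_flip_le:
  assumes fin: "finite I" and W: "weight_index d j \<subseteq> I" and x: "vnorm d x = 1"
  shows "(\<integral>\<^sup>+ \<theta>. ennreal (gate_flip d j x x' \<theta>) \<partial>gauss_vector I (\<lambda>_. 0))
       \<le> ennreal (2 * vnorm d (\<lambda>k. x k - x' k))"
proof (cases "vnorm d (\<lambda>k. x k - x' k) = 0")
  case True
  then have "gate_flip d j x x' \<theta> = 0" for \<theta>
    using preact_diff[of d \<theta> j x x'] preact_eq_0[OF True] by (simp add: gate_flip_def)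
  then show ?thesis by simp
next
  case False
  define \<nu> where "\<nu> = vnorm d (\<lambda>k. x k - x' k)"
  have \<nu>: "0 < \<nu>" using False vnorm_nonneg[of d] by (simp add: \<nu>_def less_le)
  define \<alpha> where "\<alpha> = 1 / (4 * \<nu>\<^sup>2)"
  have "1 - 2 * \<alpha> * \<nu>\<^sup>2 = (1 / sqrt 2)\<^sup>2" and "2 * \<alpha> = (1 / (sqrt 2 * \<nu>))\<^sup>2"
    using \<nu> by (simp_all add: \<alpha>_def power_divide power_mult_distrib)
  then have "ennreal (1 / sqrt (1 - 2 * \<alpha> * \<nu>\<^sup>2)) * ennreal (1 / sqrt (2 * \<alpha>)) = ennreal (2 * \<nu>)"
    using \<nu> by (simp add: ennreal_mult'[symmetric])
  moreover have "0 < \<alpha>" and "2 * \<alpha> * \<nu>\<^sup>2 < 1"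
    using \<nu> by (simp_all add: \<alpha>_def)
  ultimately show ?thesis
    using nn_integral_gate_flip_le_sqrt[OF fin W x, of \<alpha> x'] by (simp add: \<nu>_def)
qed

section \<open>A per-neuron bound on the gradient difference\<close>

definition neuron_grad_bound ::
    "nat \<Rightarrow> nat \<Rightarrow> (nat \<Rightarrow> real) \<Rightarrow> (nat \<Rightarrow> real) \<Rightarrow> real \<Rightarrow> (nat \<times> nat + nat \<Rightarrow> real) \<Rightarrow> real" where
  "neuron_grad_bound d j x x' \<delta> \<theta> =
     (\<theta> (Inr j))\<^sup>2 * (\<delta>\<^sup>2 + gate_flip d j x x' \<theta>) + (preact d \<theta> j (\<lambda>k. x k - x' k))\<^sup>2"

lemma sum_gated_diff_square_le:
  assumes x: "vnorm d x = 1" and x': "vnorm d x' = 1" and \<delta>: "vnorm d (\<lambda>k. x k - x' k) \<le> \<delta>"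
  shows "(\<Sum>k<d. (relu_deriv (preact d \<theta> j x) * x k - relu_deriv (preact d \<theta> j x') * x' k)\<^sup>2)
           \<le> \<delta>\<^sup>2 + gate_flip d j x x' \<theta>"
proof -
  define s where "s = relu_deriv (preact d \<theta> j x)"
  define s' where "s' = relu_deriv (preact d \<theta> j x')"
  have "(\<Sum>k<d. (x k)\<^sup>2) = 1" "(\<Sum>k<d. (x' k)\<^sup>2) = 1"
    using x x' by (simp_all flip: power2_vnorm)
  moreover have "(\<Sum>k<d. (x k - x' k)\<^sup>2) \<le> \<delta>\<^sup>2"
    using \<delta> vnorm_nonneg[of d "\<lambda>k. x k - x' k"] by (metis power2_vnorm power_mono)
  moreover have "s = 0 \<or> s = 1" "s' = 0 \<or> s' = 1"
    by (auto simp: s_def s'_def relu_deriv_def)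
  ultimately show ?thesis
    unfolding gate_flip_def s_def[symmetric] s'_def[symmetric] by (auto simp: power2_commute)
qed

lemma grad_diff_norm_le:
  assumes d1: "0 < d1" and x: "vnorm d x = 1" and x': "vnorm d x' = 1"
    and \<delta>: "vnorm d (\<lambda>k. x k - x' k) \<le> \<delta>"
  shows "grad_diff_norm d1 d \<theta> x x' \<le> sqrt ((\<Sum>j<d1. neuron_grad_bound d j x x' \<delta> \<theta>) / real d1)"
proof -
  have W: "(\<Sum>k<d. (grad_W d1 d \<theta> x j k - grad_W d1 d \<theta> x' j k)\<^sup>2)
         \<le> (\<theta> (Inr j))\<^sup>2 * (\<delta>\<^sup>2 + gate_flip d j x x' \<theta>) / real d1" for j
  proof -
    have "(\<Sum>k<d. (grad_W d1 d \<theta> x j k - grad_W d1 d \<theta> x' j k)\<^sup>2)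
        = (\<theta> (Inr j))\<^sup>2 / real d1
          * (\<Sum>k<d. (relu_deriv (preact d \<theta> j x) * x k - relu_deriv (preact d \<theta> j x') * x' k)\<^sup>2)"
      unfolding grad_W_def sum_distrib_left
      by (intro sum.cong refl) (simp add: power2_eq_square algebra_simps)
    also have "\<dots> \<le> (\<theta> (Inr j))\<^sup>2 / real d1 * (\<delta>\<^sup>2 + gate_flip d j x x' \<theta>)"
      by (intro mult_left_mono sum_gated_diff_square_le[OF x x' \<delta>]) auto
    finally show ?thesis by simp
  qed
  have v: "(grad_v d1 d \<theta> x j - grad_v d1 d \<theta> x' j)\<^sup>2 \<le> (preact d \<theta> j (\<lambda>k. x k - x' k))\<^sup>2 / real d1" for j
  proof -
    have "(grad_v d1 d \<theta> x j - grad_v d1 d \<theta> x' j)\<^sup>2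
        = (relu (preact d \<theta> j x) - relu (preact d \<theta> j x'))\<^sup>2 / real d1"
      unfolding grad_v_def using d1 by (simp add: power2_eq_square field_simps)
    also have "\<dots> \<le> (preact d \<theta> j x - preact d \<theta> j x')\<^sup>2 / real d1"
      by (intro divide_right_mono) (auto simp: abs_le_square_iff[symmetric] relu_abs_diff_le)
    finally show ?thesis unfolding preact_diff .
  qed
  have "(\<Sum>j<d1. \<Sum>k<d. (grad_W d1 d \<theta> x j k - grad_W d1 d \<theta> x' j k)\<^sup>2)
      + (\<Sum>j<d1. (grad_v d1 d \<theta> x j - grad_v d1 d \<theta> x' j)\<^sup>2)
      \<le> (\<Sum>j<d1. (\<theta> (Inr j))\<^sup>2 * (\<delta>\<^sup>2 + gate_flip d j x x' \<theta>) / real d1)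
        + (\<Sum>j<d1. (preact d \<theta> j (\<lambda>k. x k - x' k))\<^sup>2 / real d1)"
    by (intro add_mono sum_mono W v)
  also have "\<dots> = (\<Sum>j<d1. neuron_grad_bound d j x x' \<delta> \<theta>) / real d1"
    by (simp add: neuron_grad_bound_def sum_divide_distrib[symmetric] sum.distrib add_divide_distrib)
  finally show ?thesis
    unfolding grad_diff_norm_def by (rule real_sqrt_le_mono)
qed

lemma neuron_grad_bound_restrict:
  "neuron_grad_bound d j x x' \<delta> (restrict \<theta> (neuron_index d j)) = neuron_grad_bound d j x x' \<delta> \<theta>"
  using weight_index_subset_neuron_index
  by (simp add: neuron_grad_bound_def gate_flip_restrict preact_restrict neuron_index_def)

lemma borel_measurable_neuron_grad_bound:
  assumes "neuron_index d j \<subseteq> I"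
  shows "neuron_grad_bound d j x x' \<delta> \<in> borel_measurable (PiM I (\<lambda>_. borel))"
proof -
  have "weight_index d j \<subseteq> I" and "Inr j \<in> I"
    using assms weight_index_subset_neuron_index by (auto simp: neuron_index_def)
  note [measurable] = borel_measurable_gate_flip[OF this(1)] borel_measurable_preact[OF this(1)]
    measurable_component_singleton[OF this(2)]
  show ?thesis
    unfolding neuron_grad_bound_def[abs_def] by measurable
qed

lemma borel_measurable_grad_diff_norm:
  "(\<lambda>\<theta>. grad_diff_norm d1 d \<theta> x x') \<in> borel_measurable (PiM (param_index d1 d) (\<lambda>_. borel))"
proof -
  have coord: "(\<lambda>\<theta>. \<theta> i) \<in> borel_measurable (PiM (param_index d1 d) (\<lambda>_. borel))"
    if "i \<in> param_index d1 d" for i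
    using that by measurable
  have preact: "(\<lambda>\<theta>. preact d \<theta> j y) \<in> borel_measurable (PiM (param_index d1 d) (\<lambda>_. borel))"
    if "j < d1" for j y
    using that neuron_index_subset_param_index weight_index_subset_neuron_index
    by (blast intro: borel_measurable_preact)
  show ?thesis
    unfolding grad_diff_norm_def grad_W_def grad_v_def
    by (intro measurable_compose[OF _ borel_measurable_sqrt] borel_measurable_add borel_measurable_sum
        borel_measurable_power borel_measurable_diff borel_measurable_times borel_measurable_const coord
        measurable_compose[OF preact relu_deriv_measurable] measurable_compose[OF preact relu_measurable])
       (auto simp: param_index_def)
qed

lemma exp_add_le_mean:
  fixes a b :: real
  shows "exp (a + b) \<le> exp (2 * a) / 2 + exp (2 * b) / 2"
proof -
  have "2 * (exp a * exp b) \<le> exp a * exp a + exp b * exp b"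
    using sum_squares_ge_zero[of "exp a - exp b" 0] by (simp add: power2_eq_square algebra_simps)
  then show ?thesis
    by (simp add: exp_add[symmetric] mult_2[symmetric])
qed

lemma exp_neuron_grad_bound_le:
  "exp (neuron_grad_bound d j x x' \<delta> \<theta> / 64)
     \<le> 1/2 * exp (\<delta>\<^sup>2 / 32 * (\<theta> (Inr j))\<^sup>2)
       + 1/2 * (gate_flip d j x x' \<theta> * exp ((\<delta>\<^sup>2 + 1) / 32 * (\<theta> (Inr j))\<^sup>2))
       + 1/2 * exp (1/32 * (preact d \<theta> j (\<lambda>k. x k - x' k))\<^sup>2)"
proof -
  define v where "v = \<theta> (Inr j)"
  define F where "F = gate_flip d j x x' \<theta>"
  define h where "h = preact d \<theta> j (\<lambda>k. x k - x' k)"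
  have "exp (v\<^sup>2 * (\<delta>\<^sup>2 + F) / 32) \<le> exp (\<delta>\<^sup>2 / 32 * v\<^sup>2) + F * exp ((\<delta>\<^sup>2 + 1) / 32 * v\<^sup>2)"
    by (cases "F = 0") (auto simp: F_def gate_flip_def algebra_simps)
  moreover have "exp (neuron_grad_bound d j x x' \<delta> \<theta> / 64)
      \<le> exp (v\<^sup>2 * (\<delta>\<^sup>2 + F) / 32) / 2 + exp (1/32 * h\<^sup>2) / 2"
    using exp_add_le_mean[of "v\<^sup>2 * (\<delta>\<^sup>2 + F) / 64" "h\<^sup>2 / 64"]
    by (simp add: neuron_grad_bound_def v_def F_def h_def add_divide_distrib)
  ultimately show ?thesis
    by (simp add: v_def F_def h_def)
qed

lemma nn_integral_gate_flip_mult_exp_square: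
  assumes fin: "finite I" and N: "neuron_index d j \<subseteq> I"
  shows "(\<integral>\<^sup>+ \<theta>. ennreal (gate_flip d j x x' \<theta>) * ennreal (exp (s * (\<theta> (Inr j))\<^sup>2)) \<partial>gauss_vector I (\<lambda>_. 0))
       = (\<integral>\<^sup>+ \<theta>. ennreal (gate_flip d j x x' \<theta>) \<partial>gauss_vector I (\<lambda>_. 0))
         * (\<integral>\<^sup>+ \<theta>. ennreal (exp (s * (\<theta> (Inr j))\<^sup>2)) \<partial>gauss_vector I (\<lambda>_. 0))"
proof -
  interpret prob_space "gauss_vector I (\<lambda>_. 0)" by (rule prob_space_gauss_vector)
  have W: "weight_index d j \<subseteq> I" and R: "Inr j \<in> I"
    using N weight_index_subset_neuron_index by (auto simp: neuron_index_def)
  define B where "B = (\<lambda>b. if b then weight_index d j else {Inr j})"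
  define F where "F = (\<lambda>b \<theta>. if b then ennreal (gate_flip d j x x' \<theta>) else ennreal (exp (s * (\<theta> (Inr j))\<^sup>2)))"
  have "indep_vars (\<lambda>_. borel) F UNIV"
  proof (rule indep_vars_local_gauss_vector)
    show "disjoint_family_on B UNIV"
      by (auto simp: disjoint_family_on_def B_def weight_index_def)
    show "F b \<in> borel_measurable (PiM (B b) (\<lambda>_. borel))" for b
    proof (cases b)
      case True
      then show ?thesis
        using borel_measurable_gate_flip[of d j "weight_index d j" x x']
        by (simp add: F_def B_def)
    next
      case False
      then show ?thesis by (simp add: F_def B_def) measurable
    qed
    show "F b (restrict \<theta> (B b)) = F b \<theta>" for b \<theta>
      by (simp add: F_def B_def gate_flip_restrict)
  qed (use W R in \<open>auto simp: B_def\<close>)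
  then have "(\<integral>\<^sup>+ \<theta>. (\<Prod>b\<in>UNIV. F b \<theta>) \<partial>gauss_vector I (\<lambda>_. 0))
      = (\<Prod>b\<in>UNIV. \<integral>\<^sup>+ \<theta>. F b \<theta> \<partial>gauss_vector I (\<lambda>_. 0))"
    by (intro indep_vars_nn_integral) auto
  then show ?thesis
    by (simp add: UNIV_bool F_def mult.commute)
qed

lemma ennreal_half_sum:
  fixes a b c :: real
  assumes "0 \<le> a" "0 \<le> b" "0 \<le> c"
  shows "ennreal (1/2 * a + 1/2 * b + 1/2 * c)
           = ennreal (1/2) * ennreal a + ennreal (1/2) * ennreal b + ennreal (1/2) * ennreal c"
proof -
  have "ennreal (1/2 * a + 1/2 * b + 1/2 * c) = ennreal (1/2 * a) + ennreal (1/2 * b) + ennreal (1/2 * c)"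
    using assms by (simp add: ennreal_plus[symmetric] del: ennreal_plus)
  then show ?thesis
    using assms by (simp only: ennreal_mult'[symmetric])
qed

lemma nn_integral_exp_neuron_grad_bound_le_sum:
  assumes fin: "finite I" and N: "neuron_index d j \<subseteq> I"
  defines "M \<equiv> gauss_vector I (\<lambda>_. 0)"
  shows "(\<integral>\<^sup>+ \<theta>. ennreal (exp (neuron_grad_bound d j x x' \<delta> \<theta> / 64)) \<partial>M)
    \<le> ennreal (1/2) * (\<integral>\<^sup>+ \<theta>. ennreal (exp (\<delta>\<^sup>2 / 32 * (\<theta> (Inr j))\<^sup>2)) \<partial>M)
      + ennreal (1/2) * ((\<integral>\<^sup>+ \<theta>. ennreal (gate_flip d j x x' \<theta>) \<partial>M)
                         * (\<integral>\<^sup>+ \<theta>. ennreal (exp ((\<delta>\<^sup>2 + 1) / 32 * (\<theta> (Inr j))\<^sup>2)) \<partial>M))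
      + ennreal (1/2) * (\<integral>\<^sup>+ \<theta>. ennreal (exp (1/32 * (preact d \<theta> j (\<lambda>k. x k - x' k))\<^sup>2)) \<partial>M)"
proof -
  have W: "weight_index d j \<subseteq> I" and R: "Inr j \<in> I"
    using N weight_index_subset_neuron_index by (auto simp: neuron_index_def)
  have [measurable]: "(\<lambda>\<theta>. \<theta> (Inr j)) \<in> borel_measurable M"
    unfolding M_def measurable_gauss_vector_iff using R by measurable
  have [measurable]: "gate_flip d j x x' \<in> borel_measurable M"
    unfolding M_def measurable_gauss_vector_iff by (rule borel_measurable_gate_flip[OF W])
  note [measurable] = borel_measurable_preact_gauss_vector[OF W, of _ "\<lambda>_. 0", folded M_def]
  let ?A = "\<lambda>\<theta>. exp (\<delta>\<^sup>2 / 32 * (\<theta> (Inr j))\<^sup>2)"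
  let ?F = "\<lambda>\<theta>. gate_flip d j x x' \<theta>"
  let ?B = "\<lambda>\<theta>. exp ((\<delta>\<^sup>2 + 1) / 32 * (\<theta> (Inr j))\<^sup>2)"
  let ?C = "\<lambda>\<theta>. exp (1/32 * (preact d \<theta> j (\<lambda>k. x k - x' k))\<^sup>2)"
  have "ennreal (exp (neuron_grad_bound d j x x' \<delta> \<theta> / 64))
      \<le> ennreal (1/2) * ennreal (?A \<theta>) + ennreal (1/2) * (ennreal (?F \<theta>) * ennreal (?B \<theta>))
        + ennreal (1/2) * ennreal (?C \<theta>)" for \<theta>
  proof -
    have "ennreal (exp (neuron_grad_bound d j x x' \<delta> \<theta> / 64))
        \<le> ennreal (1/2 * ?A \<theta> + 1/2 * (?F \<theta> * ?B \<theta>) + 1/2 * ?C \<theta>)"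
      by (rule ennreal_leI exp_neuron_grad_bound_le)+
    also have "\<dots> = ennreal (1/2) * ennreal (?A \<theta>) + ennreal (1/2) * (ennreal (?F \<theta>) * ennreal (?B \<theta>))
        + ennreal (1/2) * ennreal (?C \<theta>)"
      by (subst ennreal_half_sum) (simp_all add: ennreal_mult' gate_flip_def)
    finally show ?thesis .
  qed
  then have "(\<integral>\<^sup>+ \<theta>. ennreal (exp (neuron_grad_bound d j x x' \<delta> \<theta> / 64)) \<partial>M)
      \<le> (\<integral>\<^sup>+ \<theta>. ennreal (1/2) * ennreal (?A \<theta>) + ennreal (1/2) * (ennreal (?F \<theta>) * ennreal (?B \<theta>))
        + ennreal (1/2) * ennreal (?C \<theta>) \<partial>M)"
    by (rule nn_integral_mono)
  also have "\<dots> = ennreal (1/2) * (\<integral>\<^sup>+ \<theta>. ennreal (?A \<theta>) \<partial>M)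
      + ennreal (1/2) * (\<integral>\<^sup>+ \<theta>. ennreal (?F \<theta>) * ennreal (?B \<theta>) \<partial>M)
      + ennreal (1/2) * (\<integral>\<^sup>+ \<theta>. ennreal (?C \<theta>) \<partial>M)"
    by (simp add: nn_integral_add nn_integral_cmult)
  finally show ?thesis
    unfolding M_def nn_integral_gate_flip_mult_exp_square[OF fin N] .
qed

lemma inverse_sqrt_one_minus_le:
  assumes "0 \<le> t" and "t \<le> 1/2"
  shows "1 / sqrt (1 - t) \<le> 1 + t"
proof -
  have "t * t \<le> t * (1/2)"
    using assms by (intro mult_left_mono) auto
  then have "0 \<le> t * (1 - t - t * t)"
    using assms by simp
  moreover have "(1 + t)\<^sup>2 * (1 - t) = 1 + t * (1 - t - t * t)"
    by (simp add: power2_eq_square algebra_simps)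
  ultimately have "sqrt 1 \<le> sqrt ((1 + t)\<^sup>2 * (1 - t))"
    by (intro real_sqrt_le_mono) simp
  then have "1 \<le> (1 + t) * sqrt (1 - t)"
    using assms by (simp add: real_sqrt_mult)
  then show ?thesis
    using assms by (simp add: divide_le_eq mult.commute)
qed

lemma neuron_mgf_arith:
  assumes \<delta>: "0 < \<delta>" "\<delta> \<le> 2" and \<nu>: "0 \<le> \<nu>" "\<nu> \<le> \<delta>" and P: "0 \<le> P" "P \<le> 2 * \<nu>"
  shows "1/2 * (1 / sqrt (1 - 2 * (\<delta>\<^sup>2 / 32)))
         + 1/2 * (P * (1 / sqrt (1 - 2 * ((\<delta>\<^sup>2 + 1) / 32))))
         + 1/2 * (1 / sqrt (1 - 2 * (1/32) * \<nu>\<^sup>2)) \<le> exp (2 * \<delta>)"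
proof -
  have \<delta>\<delta>: "\<delta>\<^sup>2 \<le> 2 * \<delta>" using \<delta> by (simp add: power2_eq_square mult_right_mono)
  have \<nu>\<delta>: "\<nu>\<^sup>2 \<le> \<delta>\<^sup>2" using \<nu> by (simp add: power_mono)
  have A: "1 / sqrt (1 - 2 * (\<delta>\<^sup>2 / 32)) \<le> 1 + \<delta>/8"
    using inverse_sqrt_one_minus_le[of "\<delta>\<^sup>2 / 16"] \<delta>\<delta> \<delta> by simp
  have C: "1 / sqrt (1 - 2 * (1/32) * \<nu>\<^sup>2) \<le> 1 + \<delta>/8"
    using inverse_sqrt_one_minus_le[of "\<nu>\<^sup>2 / 16"] \<delta>\<delta> \<nu>\<delta> \<delta> by simp
  have "1 / sqrt (1 - (\<delta>\<^sup>2 + 1) / 16) \<le> 1 + (\<delta>\<^sup>2 + 1) / 16"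
    using \<delta>\<delta> \<delta> by (intro inverse_sqrt_one_minus_le) auto
  moreover have "(\<delta>\<^sup>2 + 1) / 16 \<le> 5/16"
    using \<delta>\<delta> \<delta> by simp
  moreover have "2 * ((\<delta>\<^sup>2 + 1) / 32) = (\<delta>\<^sup>2 + 1) / 16"
    by simp
  ultimately have "1 / sqrt (1 - 2 * ((\<delta>\<^sup>2 + 1) / 32)) \<le> 21/16"
    by (simp only:)
  then have B: "P * (1 / sqrt (1 - 2 * ((\<delta>\<^sup>2 + 1) / 32))) \<le> 2 * \<delta> * (21/16)"
    using P \<nu> \<delta>\<delta> \<delta> by (intro mult_mono) auto
  have "1/2 * (1 / sqrt (1 - 2 * (\<delta>\<^sup>2 / 32)))
         + 1/2 * (P * (1 / sqrt (1 - 2 * ((\<delta>\<^sup>2 + 1) / 32))))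
         + 1/2 * (1 / sqrt (1 - 2 * (1/32) * \<nu>\<^sup>2)) \<le> 1 + 2 * \<delta>"
    using A B C \<delta> by linarith
  also have "\<dots> \<le> exp (2 * \<delta>)"
    using exp_ge_add_one_self[of "2 * \<delta>"] by simp
  finally show ?thesis .
qed

lemma nn_integral_exp_neuron_grad_bound_le:
  assumes fin: "finite I" and N: "neuron_index d j \<subseteq> I" and x: "vnorm d x = 1"
    and \<delta>: "0 < \<delta>" "\<delta> \<le> 2" and \<nu>: "vnorm d (\<lambda>k. x k - x' k) \<le> \<delta>"
  shows "(\<integral>\<^sup>+ \<theta>. ennreal (exp (neuron_grad_bound d j x x' \<delta> \<theta> / 64)) \<partial>gauss_vector I (\<lambda>_. 0))
           \<le> ennreal (exp (2 * \<delta>))"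
proof -
  let ?M = "gauss_vector I (\<lambda>_. 0)"
  define \<nu> where "\<nu> = vnorm d (\<lambda>k. x k - x' k)"
  have W: "weight_index d j \<subseteq> I" and R: "Inr j \<in> I"
    using N weight_index_subset_neuron_index by (auto simp: neuron_index_def)
  have \<nu>0: "0 \<le> \<nu>" and \<nu>\<delta>: "\<nu> \<le> \<delta>"
    using \<nu> vnorm_nonneg by (auto simp: \<nu>_def)
  have \<delta>4: "\<delta>\<^sup>2 \<le> 4"
    using power_mono[of \<delta> 2 2] \<delta> by simp
  have "\<nu>\<^sup>2 \<le> \<delta>\<^sup>2"
    using power_mono[OF \<nu>\<delta> \<nu>0] .
  define A where "A = 1 / sqrt (1 - 2 * (\<delta>\<^sup>2 / 32))"
  define B where "B = 1 / sqrt (1 - 2 * ((\<delta>\<^sup>2 + 1) / 32))"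
  define C where "C = 1 / sqrt (1 - 2 * (1/32) * \<nu>\<^sup>2)"
  have "0 \<le> A" "0 \<le> B" "0 \<le> C"
    using \<delta>4 \<open>\<nu>\<^sup>2 \<le> \<delta>\<^sup>2\<close> by (auto simp: A_def B_def C_def)
  have "(\<integral>\<^sup>+ \<theta>. ennreal (exp (neuron_grad_bound d j x x' \<delta> \<theta> / 64)) \<partial>?M)
      \<le> ennreal (1/2) * ennreal A + ennreal (1/2) * (ennreal (2 * \<nu>) * ennreal B) + ennreal (1/2) * ennreal C"
    using nn_integral_exp_neuron_grad_bound_le_sum[OF fin N, of x x' \<delta>]
      nn_integral_exp_square_component[OF R, of "\<delta>\<^sup>2 / 32"]
      nn_integral_exp_square_component[OF R, of "(\<delta>\<^sup>2 + 1) / 32"]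
      nn_integral_exp_square_preact[OF fin W, of "1/32" "\<lambda>k. x k - x' k"]
      nn_integral_gate_flip_le[OF fin W x, of x']
      \<delta>4 \<open>\<nu>\<^sup>2 \<le> \<delta>\<^sup>2\<close>
    by (auto simp: A_def B_def C_def \<nu>_def elim!: order_trans intro!: add_mono mult_left_mono mult_right_mono)
  also have "\<dots> = ennreal (1/2 * A + 1/2 * (2 * \<nu> * B) + 1/2 * C)"
    using \<open>0 \<le> A\<close> \<open>0 \<le> B\<close> \<open>0 \<le> C\<close> \<nu>0
    by (subst ennreal_half_sum) (simp_all add: ennreal_mult')
  also have "\<dots> \<le> ennreal (exp (2 * \<delta>))"
    unfolding A_def B_def C_def
    by (intro ennreal_leI neuron_mgf_arith[OF \<delta> \<nu>0 \<nu>\<delta>]) (use \<nu>0 in auto)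
  finally show ?thesis .
qed

section \<open>Concentration\<close>

lemma indep_vars_neuron_grad_bound:
  assumes "0 < d1"
  shows "prob_space.indep_vars (param_measure d1 d) (\<lambda>_. borel)
           (\<lambda>j. neuron_grad_bound d j x x' \<delta>) {..<d1}"
  unfolding param_measure_eq_gauss_vector using assms
  by (intro indep_vars_local_gauss_vector[where B = "neuron_index d"] borel_measurable_neuron_grad_bound
      neuron_grad_bound_restrict neuron_index_subset_param_index)
     (auto simp: disjoint_family_on_def neuron_index_def weight_index_def param_index_def)

lemma prob_sum_neuron_grad_bound_gt_le:
  assumes d1: "0 < d1" and x: "vnorm d x = 1" and \<delta>: "0 < \<delta>" "\<delta> \<le> 2"
    and \<nu>: "vnorm d (\<lambda>k. x k - x' k) \<le> \<delta>"
  defines "M \<equiv> param_measure d1 d"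
  shows "measure M {\<theta> \<in> space M. 196 * \<delta> * real d1 < (\<Sum>j<d1. neuron_grad_bound d j x x' \<delta> \<theta>)}
           \<le> exp (- real d1 * \<delta>)"
proof -
  interpret prob_space M
    unfolding M_def param_measure_eq_gauss_vector by (rule prob_space_gauss_vector)
  have "prob {\<theta> \<in> space M. 196 * \<delta> * real d1 < (\<Sum>j<d1. neuron_grad_bound d j x x' \<delta> \<theta>)}
      \<le> exp (real (card {..<d1}) * (2 * \<delta>) - 1/64 * (196 * \<delta> * real d1))"
  proof (rule prob_sum_gt_le_indep[OF _ indep_vars_neuron_grad_bound[OF d1, of d x x' \<delta>, folded M_def]])
    show "(\<integral>\<^sup>+ \<theta>. ennreal (exp (1/64 * neuron_grad_bound d j x x' \<delta> \<theta>)) \<partial>M) \<le> ennreal (exp (2 * \<delta>))"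
      if "j \<in> {..<d1}" for j
      using nn_integral_exp_neuron_grad_bound_le[OF finite_param_index neuron_index_subset_param_index
          x \<delta> \<nu>, of j d1] that
      by (simp add: M_def param_measure_eq_gauss_vector)
  qed auto
  also have "\<dots> \<le> exp (- real d1 * \<delta>)"
    using \<delta> mult_nonneg_nonneg[of \<delta> "real d1"] by (simp add: algebra_simps)
  finally show ?thesis .
qed

lemma prob_grad_diff_norm_le:
  fixes d1 :: nat
  assumes x: "on_sphere d x" and x': "on_sphere d x'" and \<delta>: "0 < \<delta>" "\<delta> \<le> 2"
    and \<nu>: "vnorm d (\<lambda>k. x k - x' k) \<le> \<delta>"
  defines "M \<equiv> param_measure d1 d"
  shows "1 - exp (- real d1 * \<delta>) \<le> measure M {\<theta> \<in> space M. grad_diff_norm d1 d \<theta> x x' \<le> 14 * sqrt \<delta>}"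
proof (cases "d1 = 0")
  case True
  then show ?thesis by simp
next
  case False
  interpret prob_space M
    unfolding M_def param_measure_eq_gauss_vector by (rule prob_space_gauss_vector)
  let ?S = "\<lambda>\<theta>. \<Sum>j<d1. neuron_grad_bound d j x x' \<delta> \<theta>"
  let ?Bad = "{\<theta> \<in> space M. 196 * \<delta> * real d1 < ?S \<theta>}"
  let ?Good = "{\<theta> \<in> space M. grad_diff_norm d1 d \<theta> x x' \<le> 14 * sqrt \<delta>}"
  have [measurable]: "neuron_grad_bound d j x x' \<delta> \<in> borel_measurable M" if "j < d1" for j
    unfolding M_def param_measure_eq_gauss_vector measurable_gauss_vector_iff
    using that by (intro borel_measurable_neuron_grad_bound neuron_index_subset_param_index)
  have [measurable]: "(\<lambda>\<theta>. grad_diff_norm d1 d \<theta> x x') \<in> borel_measurable M"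
    unfolding M_def param_measure_eq_gauss_vector measurable_gauss_vector_iff
    by (rule borel_measurable_grad_diff_norm)
  have "space M - ?Bad \<subseteq> ?Good"
  proof
    fix \<theta> assume \<theta>: "\<theta> \<in> space M - ?Bad"
    then have "?S \<theta> / real d1 \<le> 14\<^sup>2 * \<delta>"
      using False by (auto simp: field_simps)
    then have "sqrt (?S \<theta> / real d1) \<le> 14 * sqrt \<delta>"
      using real_sqrt_le_mono by (fastforce simp: real_sqrt_mult)
    moreover have "grad_diff_norm d1 d \<theta> x x' \<le> sqrt (?S \<theta> / real d1)"
      using grad_diff_norm_le False x x' \<nu> by (simp add: on_sphere_def)
    ultimately show "\<theta> \<in> ?Good"
      using \<theta> by auto
  qed
  then have "prob (space M - ?Bad) \<le> prob ?Good"
    by (intro finite_measure_mono) measurable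
  moreover have "prob ?Bad \<le> exp (- real d1 * \<delta>)"
    using prob_sum_neuron_grad_bound_gt_le False x \<delta> \<nu> by (simp add: M_def on_sphere_def)
  moreover have "?Bad \<in> events"
    by measurable
  ultimately show ?thesis
    by (simp add: prob_compl)
qed

theorem lemma25:
  shows "\<exists>C C'. C > 0 \<and> C' > 0 \<and>
    (\<forall>d d1 :: nat. \<forall>x x' :: nat \<Rightarrow> real. \<forall>\<delta> \<epsilon> :: real.
       on_sphere d x \<and> on_sphere d x' \<and> 0 < \<delta> \<and> \<delta> \<le> 2 \<and>
       vnorm d (\<lambda>k. x k - x' k) \<le> \<delta> \<and> 0 < \<epsilon> \<and> \<epsilon> < 1 \<and>
       real d1 \<ge> C / \<delta> * ln (1 / \<epsilon>) \<longrightarrow>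
       measure (param_measure d1 d)
         {\<theta> \<in> space (param_measure d1 d). grad_diff_norm d1 d \<theta> x x' \<le> C' * sqrt \<delta>}
       \<ge> 1 - \<epsilon>)"
proof (rule exI[of _ 1], rule exI[of _ 14], intro conjI allI impI)
  fix d d1 :: nat and x x' :: "nat \<Rightarrow> real" and \<delta> \<epsilon> :: real
  assume H: "on_sphere d x \<and> on_sphere d x' \<and> 0 < \<delta> \<and> \<delta> \<le> 2 \<and>
    vnorm d (\<lambda>k. x k - x' k) \<le> \<delta> \<and> 0 < \<epsilon> \<and> \<epsilon> < 1 \<and> 1 / \<delta> * ln (1 / \<epsilon>) \<le> real d1"
  then have "ln (1 / \<epsilon>) \<le> real d1 * \<delta>" and "0 < \<epsilon>"
    by (auto simp: field_simps)
  then have "- real d1 * \<delta> \<le> ln \<epsilon>"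
    by (simp add: ln_div)
  then have "exp (- real d1 * \<delta>) \<le> \<epsilon>"
    using \<open>0 < \<epsilon>\<close> by (metis exp_le_cancel_iff exp_ln)
  moreover have "1 - exp (- real d1 * \<delta>) \<le> measure (param_measure d1 d)
      {\<theta> \<in> space (param_measure d1 d). grad_diff_norm d1 d \<theta> x x' \<le> 14 * sqrt \<delta>}"
    using H by (intro prob_grad_diff_norm_le) auto
  ultimately show "1 - \<epsilon> \<le> measure (param_measure d1 d)
      {\<theta> \<in> space (param_measure d1 d). grad_diff_norm d1 d \<theta> x x' \<le> 14 * sqrt \<delta>}"
    by linarith
qed simp_all

end
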